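(* Let $A\in N_n$ be a Belitskii canonical form under $B_n$-similarity. If $Q\in M_n(\mathbb F)$ is a subpermutation such that $A\in B_nQB_n=\{BQB': B,B'\in B_n\}$, then $A\in QU_n=\{QU:U\in U_n\}$.
   Context: $\mathbb F$ is a field. $B_n$ (resp. $U_n$, $N_n$) denotes the set of $n\times n$ invertible upper triangular (resp. upper triangular with all diagonal entries $1$, strictly upper triangular) matrices over $\mathbb F$. Matrices $A,C$ are $G$-similar for a group $G$ if $C=BAB^{-1}$ for some $B\in G$. A subpermutation is a matrix each of whose rows and columns has at most one nonzero entry, and that entry equals $1$. Belitskii order: on positions $\{(i,j):1\le i<j\le n\}$ define $(i,j)\prec(i',j')$ iff $i>i'$, or $i=i'$ and $j<j'$; thus $(n-1,n)\prec(n-2,n-1)\prec(n-2,n)\prec(n-3,n-2)\prec\cdots\prec(1,n)$. Belitskii's algorithm for $B_n$-similarity on $N_n$: given $A\in N_n$ put $A^{(0)}=A$, $G^{(0)}=B_n$. For $k=0,1,\dots$, let $(p,q)$ be the $(k+1)$th position in the Belitskii order and look at the $(p,q)$ entries of all matrices $G^{(k)}$-similar to $A^{(k)}$: (a) if this entry is always $0$, or can take every value in $\mathbb F$, choose $A^{(k+1)}$ $G^{(k)}$-similar to $A^{(k)}$ with $(p,q)$ entry $0$; (b) if it can take exactly the values in $\mathbb F\setminus\{0\}$, choose $A^{(k+1)}$ $G^{(k)}$-similar to $A^{(k)}$ with $(p,q)$ entry $1$; (c) otherwise the entry is a constant $\lambda\ne0$, and $A^{(k+1)}=A^{(k)}$.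 Let $G^{(k+1)}$ be the subgroup of $g\in G^{(k)}$ such that $gA^{(k+1)}g^{-1}$ has the same entries as $A^{(k+1)}$ in the first $k+1$ positions. After the last position, the resulting matrix $A^\infty$ is the Belitskii canonical form of $A$ under $B_n$-similarity. A matrix in $N_n$ is called a Belitskii canonical form if it is the Belitskii canonical form of some matrix in $N_n$. *)

theory Defs
  imports "Jordan_Normal_Form.Matrix"
begin

(* Matrices are n x n matrices of type 'a mat, indices 0..n-1. *)

definition upper_tri_group :: "nat \<Rightarrow> 'a::field mat set" where
  "upper_tri_group n = {B \<in> carrier_mat n n. upper_triangular B \<and> invertible_mat B}"

definition unitri_group :: "nat \<Rightarrow> 'a::field mat set" where
  "unitri_group n = {U \<in> carrier_mat n n. upper_triangular U \<and> (\<forall>i<n. U $$ (i,i) = 1)}"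

definition strict_upper_set :: "nat \<Rightarrow> 'a::field mat set" where
  "strict_upper_set n = {A \<in> carrier_mat n n. upper_triangular A \<and> (\<forall>i<n. A $$ (i,i) = 0)}"

definition G_similar :: "'a::field mat set \<Rightarrow> 'a mat \<Rightarrow> 'a mat \<Rightarrow> bool" where
  "G_similar G A C \<longleftrightarrow> (\<exists>g\<in>G. \<exists>g'. similar_mat_wit C A g g')"

definition subpermutation :: "nat \<Rightarrow> 'a::field mat \<Rightarrow> bool" where
  "subpermutation n Q \<longleftrightarrow> Q \<in> carrier_mat n n \<and>
     (\<forall>i<n. \<forall>j<n. Q $$ (i,j) \<noteq> 0 \<longrightarrow>
        Q $$ (i,j) = 1 \<and> (\<forall>j'<n. j' \<noteq> j \<longrightarrow> Q $$ (i,j') = 0)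
                      \<and> (\<forall>i'<n. i' \<noteq> i \<longrightarrow> Q $$ (i',j) = 0))"

(* Belitskii order of the strictly upper positions (0-based):
   (n-2,n-1), (n-3,n-2), (n-3,n-1), ..., (0,n-1) *)
definition belitskii_positions :: "nat \<Rightarrow> (nat \<times> nat) list" where
  "belitskii_positions n = concat (map (\<lambda>i. map (\<lambda>j. (i,j)) [Suc i..<n]) (rev [0..<n - 1]))"

(* the groups G^(k) determined by a run As (As k = A^(k)) *)
fun belitskii_group :: "nat \<Rightarrow> (nat \<Rightarrow> 'a::field mat) \<Rightarrow> nat \<Rightarrow> 'a mat set" where
  "belitskii_group n As 0 = upper_tri_group n"
| "belitskii_group n As (Suc k) =
     {g \<in> belitskii_group n As k. \<forall>g' C. similar_mat_wit C (As (Suc k)) g g' \<longrightarrow>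
        (\<forall>p \<in> set (take (Suc k) (belitskii_positions n)). C $$ p = As (Suc k) $$ p)}"

definition belitskii_step :: "nat \<Rightarrow> (nat \<Rightarrow> 'a::field mat) \<Rightarrow> nat \<Rightarrow> bool" where
  "belitskii_step n As k \<longleftrightarrow>
    (let G = belitskii_group n As k; pq = belitskii_positions n ! k;
         vals = {C $$ pq | C. G_similar G (As k) C} in
     if vals = {0} \<or> vals = UNIV then
       G_similar G (As k) (As (Suc k)) \<and> As (Suc k) $$ pq = 0
     else if vals = UNIV - {0} then
       G_similar G (As k) (As (Suc k)) \<and> As (Suc k) $$ pq = 1
     else As (Suc k) = As k)"

definition belitskii_run :: "nat \<Rightarrow> 'a::field mat \<Rightarrow> (nat \<Rightarrow> 'a mat) \<Rightarrow> bool" where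
  "belitskii_run n A As \<longleftrightarrow> As 0 = A \<and>
     (\<forall>k < length (belitskii_positions n). belitskii_step n As k)"

definition belitskii_cf_of :: "nat \<Rightarrow> 'a::field mat \<Rightarrow> 'a mat \<Rightarrow> bool" where
  "belitskii_cf_of n A A' \<longleftrightarrow>
     (\<exists>As. belitskii_run n A As \<and> As (length (belitskii_positions n)) = A')"

definition is_belitskii_cf :: "nat \<Rightarrow> 'a::field mat \<Rightarrow> bool" where
  "is_belitskii_cf n A' \<longleftrightarrow> (\<exists>A \<in> strict_upper_set n. belitskii_cf_of n A A')"

end

theory Submission
  imports Defs "Jordan_Normal_Form.Determinant"
begin

text \<open>
  Let F be the output of Belitskii's algorithm and let (p,q) be a position such that row p of F
  vanishes to the left of column q. At the step treating (p,q), the group of that step contains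
  the elementary upper triangular matrices rescaling row p and, for p < r with row r of F also
  vanishing left of q, adding a multiple of row r to row p: conjugation by them does not change
  the entries fixed earlier. Rescaling shows that a nonzero pivot of F was normalised to 1;
  adding multiples of a row r whose pivot is (r,q) lets the entry (p,q) take every value, so it
  was set to 0. Hence the pivots of F are 1's in distinct rows and columns, and F = Q' U with Q'
  the subpermutation of pivots and U unitriangular.

  A subpermutation is determined by its double coset: if Q' W = B Q with B upper triangular and
  W, B with nonzero diagonals, following each 1 of Q' down its column and each 1 of Q along its
  row gives injections between the supports, and comparing the sums of the row indices forces
  the supports to coincide.
\<close>

section \<open>Upper triangular matrices and elementary similarities\<close>

lemma index_mult_mat_sum:
  assumes "A \<in> carrier_mat n m" "B \<in> carrier_mat m k" "i < n" "j < k"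
  shows "(A * B) $$ (i,j) = (\<Sum>l<m. A $$ (i,l) * B $$ (l,j))"
  using assms by (auto simp: scalar_prod_def lessThan_atLeast0 intro!: sum.cong)

lemma index_mult_mat_nonzeroE:
  assumes "A \<in> carrier_mat n m" "B \<in> carrier_mat m k" "i < n" "j < k" "(A * B) $$ (i,j) \<noteq> 0"
  obtains l where "l < m" "A $$ (i,l) \<noteq> 0" "B $$ (l,j) \<noteq> 0"
proof -
  have "(\<Sum>l<m. A $$ (i,l) * B $$ (l,j)) \<noteq> 0"
    using assms by (simp add: index_mult_mat_sum del: index_mult_mat)
  then obtain l where "l < m" "A $$ (i,l) * B $$ (l,j) \<noteq> 0"
    by (meson lessThan_iff sum.neutral)
  then show ?thesis by (intro that) auto
qed

lemma sum_lessThan_eq_single: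
  fixes f :: "nat \<Rightarrow> 'a::comm_monoid_add"
  assumes "i < n" "\<And>k. k < n \<Longrightarrow> k \<noteq> i \<Longrightarrow> f k = 0"
  shows "(\<Sum>k<n. f k) = f i"
  using assms by (subst sum.mono_neutral_right[of "{..<n}" "{i}"]) auto

lemma upper_triangular_carrierD:
  "upper_triangular A \<Longrightarrow> A \<in> carrier_mat n n \<Longrightarrow> j < i \<Longrightarrow> i < n \<Longrightarrow> A $$ (i,j) = 0"
  by auto

lemma upper_triangular_mult:
  fixes X Y :: "'a::semiring_0 mat"
  assumes "X \<in> carrier_mat n n" "Y \<in> carrier_mat n n" "upper_triangular X" "upper_triangular Y"
  shows "upper_triangular (X * Y)"
proof
  fix i j assume ij: "j < i" "i < dim_row (X * Y)"
  then have "i < n" using assms by simp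
  have "X $$ (i,l) * Y $$ (l,j) = 0" if "l < n" for l
    using assms ij \<open>i < n\<close> that by (cases "l < i") (auto simp: upper_triangular_carrierD)
  then show "(X * Y) $$ (i,j) = 0"
    using assms ij \<open>i < n\<close> by (simp add: index_mult_mat_sum del: index_mult_mat)
qed

lemma diag_mult_upper_triangular:
  fixes X Y :: "'a::semiring_0 mat"
  assumes "X \<in> carrier_mat n n" "Y \<in> carrier_mat n n" "upper_triangular X" "upper_triangular Y" "c < n"
  shows "(X * Y) $$ (c,c) = X $$ (c,c) * Y $$ (c,c)"
proof -
  have "X $$ (c,l) * Y $$ (l,c) = 0" if "l < n" "l \<noteq> c" for l
    using assms that by (cases "l < c") (auto simp: upper_triangular_carrierD)
  then show ?thesis
    using assms by (subst index_mult_mat_sum[of _ n n]) (auto intro: sum_lessThan_eq_single)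
qed

lemma upper_triangular_left_inverse:
  fixes B C :: "'a::field mat"
  assumes B: "B \<in> carrier_mat n n" "upper_triangular B" "\<And>c. c < n \<Longrightarrow> B $$ (c,c) \<noteq> 0"
    and C: "C \<in> carrier_mat n n" "C * B = 1\<^sub>m n"
  shows "upper_triangular C"
proof -
  have "\<forall>i. j < i \<longrightarrow> i < n \<longrightarrow> C $$ (i,j) = 0" for j
  proof (induction j rule: less_induct)
    case (less j)
    show ?case
    proof (intro allI impI)
      fix i assume ij: "j < i" "i < n"
      have "C $$ (i,k) * B $$ (k,j) = 0" if "k < n" "k \<noteq> j" for k
        using less ij B that by (cases "k < j") (auto simp: upper_triangular_carrierD)
      then have "(C * B) $$ (i,j) = C $$ (i,j) * B $$ (j,j)"
        using B C ij by (subst index_mult_mat_sum[of _ n n _ n]) (auto intro: sum_lessThan_eq_single)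
      then have "C $$ (i,j) * B $$ (j,j) = 0" using C ij by simp
      then show "C $$ (i,j) = 0" using B ij by simp
    qed
  qed
  then show ?thesis using C by auto
qed

lemma upper_triangular_right_inverse_diag_nonzero:
  fixes B C :: "'a::field mat"
  assumes "B \<in> carrier_mat n n" "upper_triangular B" "C \<in> carrier_mat n n" "B * C = 1\<^sub>m n" "c < n"
  shows "B $$ (c,c) \<noteq> 0"
proof
  assume "B $$ (c,c) = 0"
  then have "det B = 0"
    using assms upper_triangular_imp_det_eq_0_iff[of B n] by (auto simp: diag_mat_def)
  then show False using det_mult[of B n C] assms by simp
qed

lemma strict_upper_setD:
  "M \<in> strict_upper_set n \<Longrightarrow> j \<le> i \<Longrightarrow> i < n \<Longrightarrow> M $$ (i,j) = 0"
  unfolding strict_upper_set_def by (cases "j = i") auto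

lemma strict_upper_set_mult:
  fixes g M h :: "'a::field mat"
  assumes "M \<in> strict_upper_set n" "g \<in> carrier_mat n n" "h \<in> carrier_mat n n"
    "upper_triangular g" "upper_triangular h"
  shows "g * M * h \<in> strict_upper_set n"
  using assms upper_triangular_mult[of g n M] upper_triangular_mult[of "g * M" n h]
    diag_mult_upper_triangular[of g n M] diag_mult_upper_triangular[of "g * M" n h]
  unfolding strict_upper_set_def by auto

lemma index_mult_upper_triangular_cong:
  fixes g M M' h :: "'a::field mat"
  assumes g: "g \<in> carrier_mat n n" "upper_triangular g"
    and h: "h \<in> carrier_mat n n" "upper_triangular h"
    and M: "M \<in> carrier_mat n n" "M' \<in> carrier_mat n n"
    and pq: "p < n" "q < n"
    and agree: "\<And>a b. p \<le> a \<Longrightarrow> a < n \<Longrightarrow> b \<le> q \<Longrightarrow> M $$ (a,b) = M' $$ (a,b)"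
  shows "(g * M * h) $$ (p,q) = (g * M' * h) $$ (p,q)"
proof -
  have gM: "(g * M) $$ (p,b) = (g * M') $$ (p,b)" if "b \<le> q" for b
  proof -
    have "g $$ (p,a) * M $$ (a,b) = g $$ (p,a) * M' $$ (a,b)" if "a < n" for a
      using g pq agree[of a b] \<open>b \<le> q\<close> that
      by (cases "a < p") (auto simp: upper_triangular_carrierD)
    then have "(\<Sum>a<n. g $$ (p,a) * M $$ (a,b)) = (\<Sum>a<n. g $$ (p,a) * M' $$ (a,b))"
      by (intro sum.cong) auto
    then show ?thesis
      using g M pq \<open>b \<le> q\<close>
      by (simp add: index_mult_mat_sum[of _ n n _ n] del: index_mult_mat)
  qed
  have "(g * M) $$ (p,b) * h $$ (b,q) = (g * M') $$ (p,b) * h $$ (b,q)" if "b < n" for b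
    using gM[of b] h pq that by (cases "q < b") (auto simp: upper_triangular_carrierD)
  then have "(\<Sum>b<n. (g * M) $$ (p,b) * h $$ (b,q)) = (\<Sum>b<n. (g * M') $$ (p,b) * h $$ (b,q))"
    by (intro sum.cong) auto
  moreover have "g * M \<in> carrier_mat n n" "g * M' \<in> carrier_mat n n" using g M by auto
  ultimately show ?thesis
    using h pq by (simp only: index_mult_mat_sum[of _ n n h n])
qed

lemma upper_tri_groupI:
  fixes g h :: "'a::field mat"
  assumes "g \<in> carrier_mat n n" "h \<in> carrier_mat n n" "g * h = 1\<^sub>m n" "h * g = 1\<^sub>m n"
    "upper_triangular g"
  shows "g \<in> upper_tri_group n"
  using assms unfolding upper_tri_group_def invertible_mat_def inverts_mat_def by auto

lemma invertible_matE:
  assumes "invertible_mat g" "g \<in> carrier_mat n n"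
  obtains h where "h \<in> carrier_mat n n" "g * h = 1\<^sub>m n" "h * g = 1\<^sub>m n"
proof -
  obtain h where "inverts_mat g h" "inverts_mat h g"
    using assms(1) unfolding invertible_mat_def by blast
  then have "h \<in> carrier_mat n n" "g * h = 1\<^sub>m n" "h * g = 1\<^sub>m n"
    using assms(2) unfolding inverts_mat_def carrier_mat_def by (auto dest: arg_cong[of _ _ dim_col])
  then show ?thesis using that by blast
qed

lemma upper_tri_group_diag_nonzero:
  assumes "g \<in> upper_tri_group n" "c < n"
  shows "g $$ (c,c) \<noteq> 0"
proof -
  obtain h where "h \<in> carrier_mat n n" "g * h = 1\<^sub>m n"
    using assms(1) invertible_matE unfolding upper_tri_group_def by blast
  then show ?thesis
    using assms upper_triangular_right_inverse_diag_nonzero unfolding upper_tri_group_def by blast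
qed

lemma upper_tri_group_inverse:
  fixes g h :: "'a::field mat"
  assumes "g \<in> upper_tri_group n" "h \<in> carrier_mat n n" "g * h = 1\<^sub>m n" "h * g = 1\<^sub>m n"
  shows "h \<in> upper_tri_group n"
  using assms upper_triangular_left_inverse[of g n h] upper_tri_group_diag_nonzero[OF assms(1)]
    upper_tri_groupI[of h n g] unfolding upper_tri_group_def by blast

lemma upper_tri_group_inverseE:
  fixes g :: "'a::field mat"
  assumes "g \<in> upper_tri_group n"
  obtains h where "h \<in> upper_tri_group n" "g * h = 1\<^sub>m n" "h * g = 1\<^sub>m n"
  using assms invertible_matE upper_tri_group_inverse[OF assms] unfolding upper_tri_group_def
  by (metis (no_types, lifting) mem_Collect_eq)

lemma similar_mat_wit_carrierD:
  assumes "similar_mat_wit C M g h" "M \<in> carrier_mat n n"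
  shows "C \<in> carrier_mat n n" "g \<in> carrier_mat n n" "h \<in> carrier_mat n n"
    "g * h = 1\<^sub>m n" "h * g = 1\<^sub>m n" "C = g * M * h"
proof -
  note wit = similar_mat_witD[OF refl assms(1)]
  have n: "dim_row C = n" using wit(5) assms(2) unfolding carrier_mat_def by simp
  show "C \<in> carrier_mat n n" "g \<in> carrier_mat n n" "h \<in> carrier_mat n n"
    "g * h = 1\<^sub>m n" "h * g = 1\<^sub>m n" "C = g * M * h"
    using wit[unfolded n] by blast+
qed

lemma similar_mat_wit_conj:
  assumes "similar_mat_wit C M g h" "M \<in> carrier_mat n n" "M' \<in> carrier_mat n n"
  shows "similar_mat_wit (g * M' * h) M' g h"
  using similar_mat_wit_carrierD[OF assms(1,2)] assms(3) by (intro similar_mat_witI[of _ _ n]) auto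

lemma similar_mat_wit_inverse_unique:
  assumes "similar_mat_wit C M g h" "similar_mat_wit C' M' g h'" "M \<in> carrier_mat n n"
    "M' \<in> carrier_mat n n"
  shows "h' = h"
proof -
  have g: "g \<in> carrier_mat n n" "h \<in> carrier_mat n n" "h * g = 1\<^sub>m n"
    using similar_mat_wit_carrierD[OF assms(1,3)] by auto
  have h': "h' \<in> carrier_mat n n" "g * h' = 1\<^sub>m n"
    using similar_mat_wit_carrierD[OF assms(2,4)] by auto
  have "h = h * (g * h')" unfolding h'(2) using g(2) by simp
  also have "\<dots> = (h * g) * h'" using g(1,2) h'(1) by simp
  also have "\<dots> = h'" unfolding g(3) using h'(1) by simp
  finally show ?thesis by simp
qed

lemma similar_mat_wit_mult_col_div_row:
  fixes A :: "'a::field mat"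
  assumes A: "A \<in> carrier_mat n n" and "k < n" "a \<noteq> 0"
  shows "similar_mat_wit (mult_col_div_row a k A) A (multrow_mat n k (inverse a)) (multrow_mat n k a)"
proof (rule similar_mat_witI)
  show "multrow_mat n k (inverse a) * multrow_mat n k a = 1\<^sub>m n"
    using multrow_mat_inv[of k n "inverse a"] assms by simp
  show "multrow_mat n k a * multrow_mat n k (inverse a) = 1\<^sub>m n"
    using multrow_mat_inv[of k n a] assms by simp
  have "mult_col_div_row a k A = multrow_mat n k (inverse a) * (A * multrow_mat n k a)"
    unfolding mult_col_div_row_def multcol_mat[OF A] by (rule multrow_mat[of _ n n]) (use A in simp)
  then show "mult_col_div_row a k A = multrow_mat n k (inverse a) * A * multrow_mat n k a"
    using A by (simp add: assoc_mult_mat[of _ n n _ n _ n])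
qed (use A in simp_all)
lemma similar_mat_wit_add_col_sub_row:
  fixes A :: "'a::field mat"
  assumes A: "A \<in> carrier_mat n n" and kl: "k < n" "l < n" "k \<noteq> l"
  shows "similar_mat_wit (add_col_sub_row a k l A) A (addrow_mat n (- a) k l) (addrow_mat n a k l)"
proof (rule similar_mat_witI)
  show "addrow_mat n (- a) k l * addrow_mat n a k l = 1\<^sub>m n"
    using addrow_mat_inv[OF kl, of "- a"] by simp
  show "addrow_mat n a k l * addrow_mat n (- a) k l = 1\<^sub>m n"
    by (rule addrow_mat_inv[OF kl])
  have "add_col_sub_row a k l A = addrow_mat n (- a) k l * (A * addrow_mat n a k l)"
    unfolding add_col_sub_row_def addcol_mat[OF A kl(1)]
    by (rule addrow_mat[of _ n n]) (use A kl in simp_all)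
  then show "add_col_sub_row a k l A = addrow_mat n (- a) k l * A * addrow_mat n a k l"
    using A by (simp add: assoc_mult_mat[of _ n n _ n _ n])
qed (use A in simp_all)

lemma multrow_mat_in_upper_tri_group:
  fixes a :: "'a::field"
  assumes "k < n" "a \<noteq> 0"
  shows "multrow_mat n k a \<in> upper_tri_group n"
proof (rule upper_tri_groupI)
  show "multrow_mat n k a * multrow_mat n k (inverse a) = 1\<^sub>m n"
    using multrow_mat_inv[of k n a] assms by simp
  show "multrow_mat n k (inverse a) * multrow_mat n k a = 1\<^sub>m n"
    using multrow_mat_inv[of k n "inverse a"] assms by simp
qed auto

lemma addrow_mat_in_upper_tri_group:
  fixes a :: "'a::field"
  assumes "k < l" "l < n"
  shows "addrow_mat n a k l \<in> upper_tri_group n"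
proof (rule upper_tri_groupI)
  show "addrow_mat n a k l * addrow_mat n (- a) k l = 1\<^sub>m n"
    using addrow_mat_inv[of k n l a] assms by simp
  show "addrow_mat n (- a) k l * addrow_mat n a k l = 1\<^sub>m n"
    using addrow_mat_inv[of k n l "- a"] assms by simp
qed (use assms in \<open>auto simp: upper_triangular_def\<close>)

section \<open>Subpermutations and pivots\<close>

lemma subpermutationD:
  assumes "subpermutation n P" "i < n" "j < n" "P $$ (i,j) \<noteq> 0"
  shows "P $$ (i,j) = 1" "\<And>j'. j' < n \<Longrightarrow> j' \<noteq> j \<Longrightarrow> P $$ (i,j') = 0"
    "\<And>i'. i' < n \<Longrightarrow> i' \<noteq> i \<Longrightarrow> P $$ (i',j) = 0"
  using assms(1)[unfolded subpermutation_def, THEN conjunct2, rule_format, OF assms(2-4)] by simp_all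

lemma subpermutation_mult_left_index:
  assumes P: "subpermutation n P" and W: "W \<in> carrier_mat n n"
    and ic: "i < n" "c < n" "P $$ (i,c) \<noteq> 0" and "j < n"
  shows "(P * W) $$ (i,j) = W $$ (c,j)"
proof -
  have "P \<in> carrier_mat n n" using P unfolding subpermutation_def by simp
  then have "(P * W) $$ (i,j) = (\<Sum>k<n. P $$ (i,k) * W $$ (k,j))"
    using W ic(1) \<open>j < n\<close> by (rule index_mult_mat_sum)
  also have "\<dots> = P $$ (i,c) * W $$ (c,j)"
    by (rule sum_lessThan_eq_single) (simp_all add: ic subpermutationD(2)[OF P ic])
  finally show ?thesis using subpermutationD(1)[OF P ic] by simp
qed

lemma subpermutation_mult_right_index:
  assumes P: "subpermutation n P" and B: "B \<in> carrier_mat n n"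
    and ac: "a < n" "c < n" "P $$ (a,c) \<noteq> 0" and "i < n"
  shows "(B * P) $$ (i,c) = B $$ (i,a)"
proof -
  have "P \<in> carrier_mat n n" using P unfolding subpermutation_def by simp
  with B have "(B * P) $$ (i,c) = (\<Sum>k<n. B $$ (i,k) * P $$ (k,c))"
    using \<open>i < n\<close> ac(2) by (rule index_mult_mat_sum)
  also have "\<dots> = B $$ (i,a) * P $$ (a,c)"
    by (rule sum_lessThan_eq_single) (simp_all add: ac subpermutationD(3)[OF P ac])
  finally show ?thesis using subpermutationD(1)[OF P ac] by simp
qed

lemma pair_set_eq_by_matchings:
  fixes S T :: "(nat \<times> nat) set"
  assumes fin: "finite S" "finite T" and inj: "inj_on snd S" "inj_on fst T"
    and down: "\<And>i j. (i,j) \<in> S \<Longrightarrow> \<exists>i'. i \<le> i' \<and> (i',j) \<in> T"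
    and same_row: "\<And>i j. (i,j) \<in> T \<Longrightarrow> \<exists>j'. (i,j') \<in> S"
  shows "S = T"
proof -
  have "\<forall>x\<in>S. \<exists>y. y \<in> T \<and> snd y = snd x \<and> fst x \<le> fst y"
  proof
    fix x assume "x \<in> S"
    then obtain i' where "fst x \<le> i'" "(i', snd x) \<in> T" using down[of "fst x" "snd x"] by auto
    then show "\<exists>y. y \<in> T \<and> snd y = snd x \<and> fst x \<le> fst y" by force
  qed
  then obtain f where f: "\<And>x. x \<in> S \<Longrightarrow> f x \<in> T \<and> snd (f x) = snd x \<and> fst x \<le> fst (f x)"
    by (metis bchoice)
  have "\<forall>y\<in>T. \<exists>x. x \<in> S \<and> fst x = fst y"
  proof
    fix y assume "y \<in> T"
    then obtain j' where "(fst y, j') \<in> S" using same_row[of "fst y" "snd y"] by auto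
    then show "\<exists>x. x \<in> S \<and> fst x = fst y" by force
  qed
  then obtain g where g: "\<And>y. y \<in> T \<Longrightarrow> g y \<in> S \<and> fst (g y) = fst y"
    by (metis bchoice)
  have inj_f: "inj_on f S" using inj(1) f by (metis inj_on_def)
  have inj_g: "inj_on g T" using inj(2) g by (metis inj_on_def)
  have fS: "f ` S \<subseteq> T" and gT: "g ` T \<subseteq> S" using f g by auto
  have "card S = card T" by (rule card_bij_eq[OF inj_f fS inj_g gT fin])
  then have f_onto: "f ` S = T" and g_onto: "g ` T = S"
    using card_subset_eq[OF fin(2) fS] card_subset_eq[OF fin(1) gT]
      card_image[OF inj_f] card_image[OF inj_g] by auto
  \<comment> \<open>f is a bijection that keeps columns and can only increase rows, g keeps rows\<close>
  have row_sums: "(\<Sum>x\<in>S. fst (f x)) = (\<Sum>x\<in>S. fst x)"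
  proof -
    have "(\<Sum>x\<in>S. fst (f x)) = (\<Sum>y\<in>T. fst y)"
      using sum.reindex[OF inj_f, of fst] f_onto by simp
    also have "\<dots> = (\<Sum>y\<in>T. fst (g y))" by (rule sum.cong) (use g in auto)
    also have "\<dots> = (\<Sum>x\<in>S. fst x)"
      using sum.reindex[OF inj_g, of fst] g_onto by simp
    finally show ?thesis .
  qed
  have f_id: "f x = x" if "x \<in> S" for x
  proof -
    have "fst x = fst (f x)" using sum_mono_inv[OF row_sums[symmetric] _ that fin(1)] f by blast
    then show ?thesis using f[OF that] by (simp add: prod_eq_iff)
  qed
  have "f ` S = id ` S" using f_id by (intro image_cong) auto
  then show ?thesis using f_onto by simp
qed

lemma subpermutations_eq_if_mult_eq:
  fixes P1 P2 W B :: "'a::field mat"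
  assumes P1: "subpermutation n P1" and P2: "subpermutation n P2"
    and W: "W \<in> carrier_mat n n" "\<And>c. c < n \<Longrightarrow> W $$ (c,c) \<noteq> 0"
    and B: "B \<in> carrier_mat n n" "upper_triangular B" "\<And>c. c < n \<Longrightarrow> B $$ (c,c) \<noteq> 0"
    and eq: "P1 * W = B * P2"
  shows "P1 = P2"
proof -
  define supp where "supp P = {(i,j). i < n \<and> j < n \<and> P $$ (i,j) \<noteq> 0}" for P :: "'a mat"
  have fin: "finite (supp P)" for P
    by (rule finite_subset[of _ "{..<n} \<times> {..<n}"]) (auto simp: supp_def)
  have carrier: "P1 \<in> carrier_mat n n" "P2 \<in> carrier_mat n n"
    using P1 P2 unfolding subpermutation_def by simp_all
  have "supp P1 = supp P2"
  proof (rule pair_set_eq_by_matchings[OF fin fin])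
    show "inj_on snd (supp P1)"
    proof (rule inj_onI)
      fix x y assume xy: "x \<in> supp P1" "y \<in> supp P1" "snd x = snd y"
      then obtain i i' c where "x = (i,c)" "y = (i',c)" by (metis prod.collapse)
      with xy show "x = y" using subpermutationD(3)[OF P1, of i c i'] by (auto simp: supp_def)
    qed
    show "inj_on fst (supp P2)"
    proof (rule inj_onI)
      fix x y assume xy: "x \<in> supp P2" "y \<in> supp P2" "fst x = fst y"
      then obtain a c c' where "x = (a,c)" "y = (a,c')" by (metis prod.collapse)
      with xy show "x = y" using subpermutationD(2)[OF P2, of a c c'] by (auto simp: supp_def)
    qed
  next
    fix i c assume "(i,c) \<in> supp P1"
    then have ic: "i < n" "c < n" "P1 $$ (i,c) \<noteq> 0" by (auto simp: supp_def)
    have "(B * P2) $$ (i,c) \<noteq> 0"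
      using subpermutation_mult_left_index[OF P1 W(1) ic ic(2)] W(2) ic eq by simp
    then obtain a where "a < n" "B $$ (i,a) \<noteq> 0" "P2 $$ (a,c) \<noteq> 0"
      using index_mult_mat_nonzeroE[OF B(1) carrier(2) ic(1,2)] by blast
    moreover then have "i \<le> a" using B ic by (meson not_le upper_triangular_carrierD)
    ultimately show "\<exists>a. i \<le> a \<and> (a,c) \<in> supp P2" using ic by (auto simp: supp_def)
  next
    fix a c assume "(a,c) \<in> supp P2"
    then have ac: "a < n" "c < n" "P2 $$ (a,c) \<noteq> 0" by (auto simp: supp_def)
    have "(P1 * W) $$ (a,c) \<noteq> 0"
      using subpermutation_mult_right_index[OF P2 B(1) ac ac(1)] B(3) ac eq by simp
    then obtain c' where "c' < n" "P1 $$ (a,c') \<noteq> 0"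
      using index_mult_mat_nonzeroE[OF carrier(1) W(1) ac(1,2)] by blast
    then show "\<exists>c'. (a,c') \<in> supp P1" using ac by (auto simp: supp_def)
  qed
  show "P1 = P2"
  proof (rule eq_matI)
    fix i j assume "i < dim_row P2" "j < dim_col P2"
    then have ij: "i < n" "j < n" using carrier by auto
    show "P1 $$ (i,j) = P2 $$ (i,j)"
    proof (cases "P1 $$ (i,j) = 0")
      case True
      then show ?thesis using \<open>supp P1 = supp P2\<close> ij by (auto simp: supp_def)
    next
      case False
      then have "P2 $$ (i,j) \<noteq> 0" using \<open>supp P1 = supp P2\<close> ij by (auto simp: supp_def)
      then show ?thesis using subpermutationD(1)[OF P1 ij False] subpermutationD(1)[OF P2 ij] by simp
    qed
  qed (use carrier in auto)
qed

lemma subpermutation_double_coset_eq: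
  fixes P Q W B B' :: "'a::field mat"
  assumes P: "subpermutation n P" and Q: "subpermutation n Q"
    and W: "W \<in> carrier_mat n n" "upper_triangular W" "\<And>c. c < n \<Longrightarrow> W $$ (c,c) \<noteq> 0"
    and B: "B \<in> upper_tri_group n" "B' \<in> upper_tri_group n"
    and eq: "P * W = B * Q * B'"
  shows "P = Q"
proof -
  obtain C where C: "C \<in> upper_tri_group n" "B' * C = 1\<^sub>m n"
    using upper_tri_group_inverseE[OF B(2)] by blast
  have carriers: "B \<in> carrier_mat n n" "B' \<in> carrier_mat n n" "C \<in> carrier_mat n n"
    "P \<in> carrier_mat n n" "Q \<in> carrier_mat n n"
    using B C P Q unfolding upper_tri_group_def subpermutation_def by auto
  have "P * (W * C) = (P * W) * C" using W(1) carriers by simp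
  also have "\<dots> = (B * Q) * (B' * C)"
    unfolding eq using carriers by (simp add: assoc_mult_mat[of _ n n _ n _ n])
  also have "\<dots> = B * Q" using C(2) carriers by simp
  finally have "P * (W * C) = B * Q" .
  moreover have "(W * C) $$ (c,c) \<noteq> 0" if "c < n" for c
  proof -
    have "(W * C) $$ (c,c) = W $$ (c,c) * C $$ (c,c)"
      using W(1,2) C(1) that by (intro diag_mult_upper_triangular) (auto simp: upper_tri_group_def)
    then show ?thesis using W(3)[OF that] upper_tri_group_diag_nonzero[OF C(1) that] by simp
  qed
  ultimately show ?thesis
    using subpermutations_eq_if_mult_eq[OF P Q, of "W * C" B] W(1) carriers B(1)
      upper_tri_group_diag_nonzero unfolding upper_tri_group_def by auto
qed

definition pivot :: "'a::zero mat \<Rightarrow> nat \<Rightarrow> nat \<Rightarrow> bool" where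
  "pivot A i j \<longleftrightarrow> A $$ (i,j) \<noteq> 0 \<and> (\<forall>c<j. A $$ (i,c) = 0)"

lemma pivot_unique_col: "pivot A i j \<Longrightarrow> pivot A i j' \<Longrightarrow> j = j'"
  unfolding pivot_def by (cases j j' rule: linorder_cases) auto

lemma pivot_exists:
  assumes "A $$ (i,j) \<noteq> 0"
  obtains j' where "j' \<le> j" "pivot A i j'"
proof -
  define j' where "j' = (LEAST c. A $$ (i,c) \<noteq> 0)"
  have "A $$ (i,j') \<noteq> 0" unfolding j'_def using assms by (rule LeastI)
  moreover have "j' \<le> j" unfolding j'_def using assms by (rule Least_le)
  moreover have "A $$ (i,c) = 0" if "c < j'" for c
    using that not_less_Least unfolding j'_def by blast
  ultimately show ?thesis using that unfolding pivot_def by blast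
qed

definition pivot_mat :: "nat \<Rightarrow> 'a::zero_neq_one mat \<Rightarrow> 'a mat" where
  "pivot_mat n A = mat n n (\<lambda>(i,j). if pivot A i j then 1 else 0)"

text \<open>
  Row c of pivot_rows_mat n A is the row of A with its pivot in column c, or the c-th unit row if
  there is none; the THE is only meaningful when pivots lie in distinct rows, as assumed below.
\<close>

definition pivot_rows_mat :: "nat \<Rightarrow> 'a::zero_neq_one mat \<Rightarrow> 'a mat" where
  "pivot_rows_mat n A = mat n n (\<lambda>(c,j).
     if \<exists>i<n. pivot A i c then A $$ (THE i. i < n \<and> pivot A i c, j) else of_bool (c = j))"

context
  fixes A :: "'a::field mat" and n :: nat
  assumes unique_row:
    "\<And>i i' j. pivot A i j \<Longrightarrow> pivot A i' j \<Longrightarrow> i < n \<Longrightarrow> i' < n \<Longrightarrow> j < n \<Longrightarrow> i = i'"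
begin

lemma subpermutation_pivot_mat: "subpermutation n (pivot_mat n A)"
  unfolding subpermutation_def pivot_mat_def
  by (auto dest: pivot_unique_col unique_row split: if_splits)

lemma index_pivot_rows_mat:
  assumes "pivot A i c" "i < n" "c < n" "j < n"
  shows "pivot_rows_mat n A $$ (c,j) = A $$ (i,j)"
proof -
  have "(THE i. i < n \<and> pivot A i c) = i" using assms unique_row by blast
  then show ?thesis using assms by (auto simp: pivot_rows_mat_def)
qed

lemma index_pivot_rows_mat_no_pivot:
  assumes "\<forall>i<n. \<not> pivot A i c" "c < n" "j < n"
  shows "pivot_rows_mat n A $$ (c,j) = of_bool (c = j)"
  using assms by (auto simp: pivot_rows_mat_def)

lemma pivot_rows_mat_unitri:
  assumes one: "\<And>i j. pivot A i j \<Longrightarrow> i < n \<Longrightarrow> j < n \<Longrightarrow> A $$ (i,j) = 1"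
  shows "pivot_rows_mat n A \<in> unitri_group n"
proof -
  have "pivot_rows_mat n A $$ (c,j) = of_bool (c = j)" if "j \<le> c" "c < n" for c j
  proof (cases "\<exists>i<n. pivot A i c")
    case True
    then obtain i where "i < n" "pivot A i c" by blast
    then show ?thesis
      using index_pivot_rows_mat[of i c j] one[of i c] that unfolding pivot_def by auto
  next
    case False
    then show ?thesis using index_pivot_rows_mat_no_pivot[of c j] that by simp
  qed
  then show ?thesis unfolding unitri_group_def by (auto simp: pivot_rows_mat_def)
qed

lemma pivot_mat_mult_pivot_rows_mat:
  assumes "A \<in> carrier_mat n n"
  shows "A = pivot_mat n A * pivot_rows_mat n A"
proof (rule eq_matI)
  let ?Q = "pivot_mat n A" and ?U = "pivot_rows_mat n A"
  have carrier: "?Q \<in> carrier_mat n n" "?U \<in> carrier_mat n n"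
    by (simp_all add: pivot_mat_def pivot_rows_mat_def)
  fix i j assume "i < dim_row (?Q * ?U)" "j < dim_col (?Q * ?U)"
  then have ij: "i < n" "j < n" using carrier by simp_all
  show "A $$ (i,j) = (?Q * ?U) $$ (i,j)"
  proof (cases "\<exists>c<n. A $$ (i,c) \<noteq> 0")
    case True
    then obtain c where c: "c < n" "pivot A i c" by (meson order.strict_trans1 pivot_exists)
    have "(?Q * ?U) $$ (i,j) = ?U $$ (c,j)"
      by (rule subpermutation_mult_left_index[OF subpermutation_pivot_mat])
        (use c ij carrier in \<open>simp_all add: pivot_mat_def\<close>)
    then show ?thesis using index_pivot_rows_mat[OF c(2) ij(1) c(1) ij(2)] by simp
  next
    case False
    have "(?Q * ?U) $$ (i,j) = 0"
    proof (rule ccontr)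
      assume "(?Q * ?U) $$ (i,j) \<noteq> 0"
      then obtain c where "c < n" "?Q $$ (i,c) \<noteq> 0"
        using index_mult_mat_nonzeroE carrier ij by metis
      then show False using False ij unfolding pivot_mat_def pivot_def by auto
    qed
    then show ?thesis using False ij by simp
  qed
qed (use assms in \<open>simp_all add: pivot_mat_def pivot_rows_mat_def\<close>)

end

section \<open>The Belitskii order\<close>

definition belitskii_prec :: "nat \<times> nat \<Rightarrow> nat \<times> nat \<Rightarrow> bool" where
  "belitskii_prec x y \<longleftrightarrow> fst y < fst x \<or> (fst x = fst y \<and> snd x < snd y)"

lemma set_belitskii_positions: "set (belitskii_positions n) = {(i,j). i < j \<and> j < n}"
  unfolding belitskii_positions_def by (auto simp: image_iff)

lemma sorted_wrt_belitskii_positions: "sorted_wrt belitskii_prec (belitskii_positions n)"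
proof -
  have "sorted_wrt belitskii_prec (concat (map (\<lambda>i. map (\<lambda>j. (i,j)) [Suc i..<n]) (rev [0..<m])))"
    for m
  proof (induction m)
    case (Suc m)
    have "sorted_wrt belitskii_prec (map (\<lambda>j. (m,j)) [Suc m..<n])"
      by (simp add: sorted_wrt_map belitskii_prec_def sorted_wrt_mono_rel[OF _ sorted_wrt_upt])
    then show ?case using Suc.IH by (auto simp: sorted_wrt_append) (auto simp: belitskii_prec_def)
  qed simp
  then show ?thesis unfolding belitskii_positions_def .
qed

lemma set_take_sorted_wrt:
  assumes "sorted_wrt R xs" "k < length xs" "\<And>x y. R x y \<Longrightarrow> \<not> R y x"
  shows "set (take k xs) = {x \<in> set xs. R x (xs ! k)}"
proof (rule equalityI; rule subsetI)
  fix x assume "x \<in> set (take k xs)"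
  then obtain i where "i < k" "x = xs ! i" using assms(2) by (auto simp: in_set_conv_nth)
  then show "x \<in> {x \<in> set xs. R x (xs ! k)}"
    using assms(1,2) by (auto simp: sorted_wrt_iff_nth_less)
next
  fix x assume x: "x \<in> {x \<in> set xs. R x (xs ! k)}"
  then obtain i where i: "i < length xs" "x = xs ! i" by (auto simp: in_set_conv_nth)
  have "i < k"
  proof (rule ccontr)
    assume "\<not> i < k"
    then consider "i = k" | "k < i" by linarith
    then have "x = xs ! k \<or> R (xs ! k) x"
      using assms(1) i by cases (auto simp: sorted_wrt_iff_nth_less)
    then show False using x assms(3) by blast
  qed
  then show "x \<in> set (take k xs)" using i by (auto simp: in_set_conv_nth)
qed

section \<open>Runs of Belitskii's algorithm\<close>

locale belitskii_algorithm_run =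
  fixes n :: nat and As :: "nat \<Rightarrow> 'a::field mat"
  assumes start: "As 0 \<in> strict_upper_set n"
    and steps: "\<And>k. k < length (belitskii_positions n) \<Longrightarrow> belitskii_step n As k"
begin

abbreviation pos :: "(nat \<times> nat) list" where "pos \<equiv> belitskii_positions n"
abbreviation N :: nat where "N \<equiv> length pos"
abbreviation canon :: "'a mat" where "canon \<equiv> As N"
abbreviation G :: "nat \<Rightarrow> 'a mat set" where "G \<equiv> belitskii_group n As"

definition settled :: "nat \<Rightarrow> (nat \<times> nat) set" where
  "settled k = set (take k pos)"

definition entry_values :: "nat \<Rightarrow> 'a set" where
  "entry_values k = {C $$ (pos ! k) | C. G_similar (G k) (As k) C}"

lemma settled_mono: "j \<le> k \<Longrightarrow> settled j \<subseteq> settled k"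
  unfolding settled_def by (rule set_take_subset_set_take)

lemma settled_iff:
  assumes "k < N" "pos ! k = (p,q)"
  shows "(i,j) \<in> settled k \<longleftrightarrow> i < j \<and> j < n \<and> (p < i \<or> i = p \<and> j < q)"
proof -
  have "settled k = {x \<in> set pos. belitskii_prec x (pos ! k)}"
    unfolding settled_def using sorted_wrt_belitskii_positions assms(1)
    by (rule set_take_sorted_wrt) (auto simp: belitskii_prec_def)
  then show ?thesis using assms(2) by (auto simp: set_belitskii_positions belitskii_prec_def)
qed

lemma settled_all: "settled N = {(i,j). i < j \<and> j < n}"
  unfolding settled_def by (simp add: set_belitskii_positions)

lemma settled_southwest:
  assumes "k \<le> N" "(i,j) \<in> settled k" "i \<le> a" "a < b" "b \<le> j"
  shows "(a,b) \<in> settled k"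
proof (cases "k = N")
  case True
  then show ?thesis using assms by (auto simp: settled_all)
next
  case False
  then obtain p q where k: "k < N" "pos ! k = (p,q)" using assms(1) by (cases "pos ! k") auto
  then show ?thesis using assms(2-) by (auto simp: settled_iff[OF k])
qed

lemma position_settled: "k < N \<Longrightarrow> pos ! k \<in> settled (Suc k)"
  unfolding settled_def by (simp add: take_Suc_conv_app_nth)

lemma position_less:
  assumes "k < N" "pos ! k = (p,q)"
  shows "p < q" "q < n"
proof -
  have "(p,q) \<in> set pos" using assms nth_mem by metis
  then show "p < q" "q < n" by (simp_all add: set_belitskii_positions)
qed

lemma position_indexE:
  assumes "p < q" "q < n"
  obtains k where "k < N" "pos ! k = (p,q)"
proof -
  have "(p,q) \<in> set pos" using assms by (simp add: set_belitskii_positions)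
  then show ?thesis using that by (metis in_set_conv_nth)
qed

lemma belitskii_group_subset: "G k \<subseteq> upper_tri_group n"
  by (induction k) auto

lemma step_cases:
  assumes "k < N"
  shows "As (Suc k) = As k \<or> G_similar (G k) (As k) (As (Suc k))"
  using steps[OF assms] unfolding belitskii_step_def Let_def by (auto split: if_splits)

lemma As_strict_upper: "k \<le> N \<Longrightarrow> As k \<in> strict_upper_set n"
proof (induction k)
  case 0
  then show ?case using start by simp
next
  case (Suc k)
  then have IH: "As k \<in> strict_upper_set n" and k: "k < N" by auto
  from step_cases[OF k] show ?case
  proof
    assume "G_similar (G k) (As k) (As (Suc k))"
    then obtain g h where g: "g \<in> upper_tri_group n"
      and wit: "similar_mat_wit (As (Suc k)) (As k) g h"
      using belitskii_group_subset unfolding G_similar_def by blast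
    have "As k \<in> carrier_mat n n" using IH unfolding strict_upper_set_def by simp
    note w = similar_mat_wit_carrierD[OF wit this]
    have "h \<in> upper_tri_group n" using upper_tri_group_inverse[OF g w(3,4,5)] .
    then show ?thesis
      unfolding w(6) using strict_upper_set_mult[OF IH] g unfolding upper_tri_group_def by blast
  qed (use IH in simp)
qed

lemma As_carrier: "k \<le> N \<Longrightarrow> As k \<in> carrier_mat n n"
  using As_strict_upper unfolding strict_upper_set_def by blast

lemma As_Suc_settled:
  assumes "k < N" "x \<in> settled k"
  shows "As (Suc k) $$ x = As k $$ x"
proof (cases k)
  case 0
  then show ?thesis using assms by (simp add: settled_def)
next
  case (Suc k')
  from step_cases[OF assms(1)] show ?thesis
  proof
    assume "G_similar (G k) (As k) (As (Suc k))"
    then obtain g h where "g \<in> G (Suc k')" "similar_mat_wit (As (Suc k)) (As (Suc k')) g h"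
      unfolding G_similar_def Suc by blast
    then show ?thesis using assms(2) unfolding Suc settled_def by auto
  qed simp
qed

lemma As_settled:
  assumes "k \<le> m" "m \<le> N" "x \<in> settled k"
  shows "As m $$ x = As k $$ x"
  using assms
proof (induction m)
  case (Suc m)
  show ?case
  proof (cases "k = Suc m")
    case False
    then have "k \<le> m" "m < N" using Suc.prems by auto
    then show ?thesis
      using Suc.IH As_Suc_settled[of m x] settled_mono[of k m] Suc.prems(3) by auto
  qed simp
qed simp

lemma canon_settled: "k \<le> N \<Longrightarrow> x \<in> settled k \<Longrightarrow> canon $$ x = As k $$ x"
  using As_settled by blast

lemma canon_position: "k < N \<Longrightarrow> canon $$ (pos ! k) = As (Suc k) $$ (pos ! k)"
  using canon_settled[of "Suc k"] position_settled by simp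

lemma conj_As_settled:
  assumes "k \<le> N" "g \<in> upper_tri_group n" "h \<in> upper_tri_group n" "(p,q) \<in> settled k"
  shows "(g * As k * h) $$ (p,q) = (g * canon * h) $$ (p,q)"
proof -
  have "p < q" "q < n" using assms(1,4) settled_mono[of k N] settled_all by auto
  show ?thesis
  proof (rule index_mult_upper_triangular_cong)
    fix a b assume ab: "p \<le> a" "a < n" "b \<le> q"
    show "As k $$ (a,b) = canon $$ (a,b)"
    proof (cases "a < b")
      case True
      then have "(a,b) \<in> settled k" using settled_southwest[OF assms(1,4)] ab by blast
      then show ?thesis using canon_settled[OF assms(1)] by simp
    next
      case False
      then show ?thesis
        using As_strict_upper[OF assms(1)] As_strict_upper[of N] ab by (simp add: strict_upper_setD)
    qed
  qed (use assms As_carrier \<open>p < q\<close> \<open>q < n\<close> in \<open>auto simp: upper_tri_group_def\<close>)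
qed

text \<open>
  Conjugation by upper triangular matrices only sees the part of a matrix southwest of an entry,
  where As k and canon agree; hence the group of step k is the stabiliser of the entries of
  canon at the settled positions.
\<close>

lemma belitskii_group_iff:
  assumes "k \<le> N" "g \<in> upper_tri_group n" "similar_mat_wit C canon g h"
  shows "g \<in> G k \<longleftrightarrow> (\<forall>x\<in>settled k. C $$ x = canon $$ x)"
  using assms(1)
proof (induction k)
  case 0
  then show ?case using assms(2) by (simp add: settled_def)
next
  case (Suc k)
  let ?M = "As (Suc k)"
  have canon: "canon \<in> carrier_mat n n" and M: "?M \<in> carrier_mat n n"
    using As_carrier Suc.prems by auto
  note w = similar_mat_wit_carrierD[OF assms(3) canon]
  have h: "h \<in> upper_tri_group n" using upper_tri_group_inverse[OF assms(2) w(3,4,5)] .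
  have conj_settled: "(g * ?M * h) $$ x = C $$ x" if "x \<in> settled (Suc k)" for x
    using conj_As_settled[OF Suc.prems assms(2) h, of "fst x" "snd x"] that w(6) by simp
  have "(\<forall>h' C'. similar_mat_wit C' ?M g h' \<longrightarrow> (\<forall>x\<in>settled (Suc k). C' $$ x = ?M $$ x))
      \<longleftrightarrow> (\<forall>x\<in>settled (Suc k). (g * ?M * h) $$ x = ?M $$ x)"
  proof (intro iffI allI impI)
    assume "\<forall>h' C'. similar_mat_wit C' ?M g h' \<longrightarrow> (\<forall>x\<in>settled (Suc k). C' $$ x = ?M $$ x)"
    then show "\<forall>x\<in>settled (Suc k). (g * ?M * h) $$ x = ?M $$ x"
      using similar_mat_wit_conj[OF assms(3) canon M] by blast
  next
    fix h' C' assume "\<forall>x\<in>settled (Suc k). (g * ?M * h) $$ x = ?M $$ x"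
      and wit: "similar_mat_wit C' ?M g h'"
    moreover have "h' = h" by (rule similar_mat_wit_inverse_unique[OF assms(3) wit canon M])
    ultimately show "\<forall>x\<in>settled (Suc k). C' $$ x = ?M $$ x"
      using similar_mat_wit_carrierD(6)[OF wit M] by simp
  qed
  then have "g \<in> G (Suc k) \<longleftrightarrow> g \<in> G k \<and> (\<forall>x\<in>settled (Suc k). (g * ?M * h) $$ x = ?M $$ x)"
    by (simp add: settled_def)
  also have "\<dots> \<longleftrightarrow>
      (\<forall>x\<in>settled k. C $$ x = canon $$ x) \<and> (\<forall>x\<in>settled (Suc k). C $$ x = canon $$ x)"
    using Suc conj_settled canon_settled[OF Suc.prems] by auto
  also have "\<dots> \<longleftrightarrow> (\<forall>x\<in>settled (Suc k). C $$ x = canon $$ x)"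
    using settled_mono[of k "Suc k"] by auto
  finally show ?case .
qed

lemma entry_valuesI:
  assumes "k < N" "g \<in> upper_tri_group n" "similar_mat_wit C canon g h"
    "\<forall>x\<in>settled k. C $$ x = canon $$ x" "similar_mat_wit C' (As k) g h"
  shows "C' $$ (pos ! k) \<in> entry_values k"
  using assms belitskii_group_iff[of k g C h] unfolding entry_values_def G_similar_def by auto

lemma canon_entry_cases:
  assumes "k < N"
  obtains "entry_values k = {0} \<or> entry_values k = UNIV" "canon $$ (pos ! k) = 0"
    | "entry_values k = UNIV - {0}" "canon $$ (pos ! k) = 1"
    | "entry_values k \<notin> {{0}, UNIV, UNIV - {0}}" "canon $$ (pos ! k) = As k $$ (pos ! k)"
proof -
  let ?V = "entry_values k"
  have step: "if ?V = {0} \<or> ?V = UNIV then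
      G_similar (G k) (As k) (As (Suc k)) \<and> As (Suc k) $$ (pos ! k) = 0
    else if ?V = UNIV - {0} then
      G_similar (G k) (As k) (As (Suc k)) \<and> As (Suc k) $$ (pos ! k) = 1
    else As (Suc k) = As k"
    using steps[OF assms] unfolding belitskii_step_def Let_def entry_values_def .
  show ?thesis
  proof (cases "?V = {0} \<or> ?V = UNIV")
    case True
    then show ?thesis using step that(1) canon_position[OF assms] by simp
  next
    case not_01: False
    show ?thesis
    proof (cases "?V = UNIV - {0}")
      case True
      then show ?thesis using step not_01 that(2) canon_position[OF assms] by simp
    next
      case False
      then show ?thesis using step not_01 that(3) canon_position[OF assms] by simp
    qed
  qed
qed

lemma row_scaling_entry_values:
  assumes k: "k < N" "pos ! k = (p,q)" and zero: "\<forall>c<q. canon $$ (p,c) = 0" and "t \<noteq> 0"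
  shows "t * As k $$ (p,q) \<in> entry_values k"
proof -
  have pq: "p < q" "q < n" using position_less[OF k] by auto
  have canon: "canon \<in> carrier_mat n n" and As: "As k \<in> carrier_mat n n"
    using As_carrier k(1) by auto
  have t: "inverse t \<noteq> 0" using \<open>t \<noteq> 0\<close> by simp
  let ?g = "multrow_mat n p t" and ?h = "multrow_mat n p (inverse t)"
  have canon_wit: "similar_mat_wit (mult_col_div_row (inverse t) p canon) canon ?g ?h"
    using similar_mat_wit_mult_col_div_row[OF canon _ t] pq by simp
  have As_wit: "similar_mat_wit (mult_col_div_row (inverse t) p (As k)) (As k) ?g ?h"
    using similar_mat_wit_mult_col_div_row[OF As _ t] pq by simp
  have fixes_settled: "\<forall>x\<in>settled k. mult_col_div_row (inverse t) p canon $$ x = canon $$ x"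
  proof
    fix x assume "x \<in> settled k"
    then obtain i j where "x = (i,j)" "i < j" "j < n" "p < i \<or> i = p \<and> j < q"
      using settled_iff[OF k] by (cases x) auto
    then show "mult_col_div_row (inverse t) p canon $$ x = canon $$ x" using zero t canon by auto
  qed
  have "mult_col_div_row (inverse t) p (As k) $$ (pos ! k) \<in> entry_values k"
    by (rule entry_valuesI[OF k(1) multrow_mat_in_upper_tri_group[OF _ \<open>t \<noteq> 0\<close>]
          canon_wit fixes_settled As_wit]) (use pq in simp)
  then show ?thesis using k(2) pq As t by simp
qed

lemma row_addition_entry_values:
  assumes k: "k < N" "pos ! k = (p,q)" and r: "p < r" "r < q"
    and zero: "\<forall>c<q. canon $$ (r,c) = 0"
  shows "As k $$ (p,q) + s * canon $$ (r,q) \<in> entry_values k"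
proof -
  have "q < n" using position_less[OF k] by simp
  have canon_strict: "canon \<in> strict_upper_set n" and canon: "canon \<in> carrier_mat n n"
    and As: "As k \<in> carrier_mat n n"
    using As_strict_upper As_carrier k(1) by auto
  let ?g = "addrow_mat n s p r" and ?h = "addrow_mat n (- s) p r"
  have canon_wit: "similar_mat_wit (add_col_sub_row (- s) p r canon) canon ?g ?h"
    using similar_mat_wit_add_col_sub_row[OF canon, of p r "- s"] r \<open>q < n\<close> by simp
  have As_wit: "similar_mat_wit (add_col_sub_row (- s) p r (As k)) (As k) ?g ?h"
    using similar_mat_wit_add_col_sub_row[OF As, of p r "- s"] r \<open>q < n\<close> by simp
  have fixes_settled: "\<forall>x\<in>settled k. add_col_sub_row (- s) p r canon $$ x = canon $$ x"
  proof
    fix x assume "x \<in> settled k"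
    then obtain i j where ij: "x = (i,j)" "i < j" "j < n" "p < i \<or> i = p \<and> j < q"
      using settled_iff[OF k] by (cases x) auto
    have "canon $$ (p,p) = 0" "canon $$ (r,r) = 0" "canon $$ (r,p) = 0"
      "p < i \<Longrightarrow> canon $$ (i,p) = 0"
      using strict_upper_setD[OF canon_strict] r \<open>q < n\<close> ij by auto
    then show "add_col_sub_row (- s) p r canon $$ x = canon $$ x"
      using ij zero canon r \<open>q < n\<close> by auto
  qed
  have "(r,q) \<in> settled k" using settled_iff[OF k] r \<open>q < n\<close> by simp
  then have "As k $$ (r,q) = canon $$ (r,q)" using canon_settled[OF less_imp_le[OF k(1)]] by simp
  moreover have "add_col_sub_row (- s) p r (As k) $$ (pos ! k) \<in> entry_values k"
    by (rule entry_valuesI[OF k(1) addrow_mat_in_upper_tri_group[OF r(1)]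
          canon_wit fixes_settled As_wit]) (use r \<open>q < n\<close> in simp)
  ultimately show ?thesis using k(2) As r \<open>q < n\<close> by simp
qed

lemma pivot_canon_less:
  assumes "pivot canon p q" "p < n"
  shows "p < q"
proof (rule ccontr)
  assume "\<not> p < q"
  then have "canon $$ (p,q) = 0"
    using strict_upper_setD[OF As_strict_upper[OF order_refl]] assms(2) by simp
  then show False using assms(1) unfolding pivot_def by simp
qed

lemma pivot_canon_eq_one:
  assumes piv: "pivot canon p q" and "p < n" "q < n"
  shows "canon $$ (p,q) = 1"
proof -
  obtain k where k: "k < N" "pos ! k = (p,q)"
    using position_indexE pivot_canon_less assms by blast
  show ?thesis
  proof (cases rule: canon_entry_cases[OF k(1)])
    case 1
    then show ?thesis using piv k(2) unfolding pivot_def by simp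
  next
    case 2
    then show ?thesis using k(2) by simp
  next
    case 3
    then have a: "As k $$ (p,q) \<noteq> 0" using piv k(2) unfolding pivot_def by simp
    have nonzero: "y \<in> entry_values k" if "y \<noteq> 0" for y
      using row_scaling_entry_values[OF k, of "y / As k $$ (p,q)"] piv a that
      unfolding pivot_def by simp
    have "entry_values k = UNIV" if "0 \<in> entry_values k"
      using that nonzero by (metis UNIV_eq_I)
    moreover have "entry_values k = UNIV - {0}" if "0 \<notin> entry_values k"
      using that nonzero by auto
    ultimately show ?thesis using 3 by auto
  qed
qed

lemma canon_above_pivot_eq_zero:
  assumes piv: "pivot canon r q" and "p < r" "r < n" "q < n"
  shows "canon $$ (p,q) = 0"
proof -
  have "r < q" using pivot_canon_less piv assms(3) by blast
  then obtain k where k: "k < N" "pos ! k = (p,q)"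
    using position_indexE[of p q] \<open>p < r\<close> \<open>q < n\<close> by auto
  have rq: "canon $$ (r,q) \<noteq> 0" and zero: "\<forall>c<q. canon $$ (r,c) = 0"
    using piv unfolding pivot_def by auto
  have "y \<in> entry_values k" for y
  proof -
    define s where "s = (y - As k $$ (p,q)) / canon $$ (r,q)"
    have "As k $$ (p,q) + s * canon $$ (r,q) \<in> entry_values k"
      by (rule row_addition_entry_values[OF k \<open>p < r\<close> \<open>r < q\<close> zero])
    then show ?thesis using rq by (simp add: s_def)
  qed
  then have "entry_values k = UNIV" by auto
  then show ?thesis by (cases rule: canon_entry_cases[OF k(1)]) (use k(2) in auto)
qed

lemma pivot_canon_unique_row:
  assumes "pivot canon p q" "pivot canon r q" "p < n" "r < n" "q < n"
  shows "p = r"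
proof (rule ccontr)
  assume "p \<noteq> r"
  then consider "p < r" | "r < p" by linarith
  then show False
  proof cases
    case 1
    then show False using canon_above_pivot_eq_zero[of r q p] assms unfolding pivot_def by simp
  next
    case 2
    then show False using canon_above_pivot_eq_zero[of p q r] assms unfolding pivot_def by simp
  qed
qed

end

lemma belitskii_cf_factorization:
  fixes A :: "'a::field mat"
  assumes "is_belitskii_cf n A"
  shows "subpermutation n (pivot_mat n A)" "pivot_rows_mat n A \<in> unitri_group n"
    "A = pivot_mat n A * pivot_rows_mat n A"
proof -
  obtain A0 As where run: "belitskii_run n A0 As" "A0 \<in> strict_upper_set n"
      "As (length (belitskii_positions n)) = A"
    using assms unfolding is_belitskii_cf_def belitskii_cf_of_def by blast
  interpret belitskii_algorithm_run n As
    using run unfolding belitskii_run_def by unfold_locales auto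
  note unique_row = pivot_canon_unique_row[unfolded run(3)]
  show "subpermutation n (pivot_mat n A)"
    using unique_row by (rule subpermutation_pivot_mat)
  show "pivot_rows_mat n A \<in> unitri_group n"
    using unique_row pivot_canon_eq_one[unfolded run(3)] by (rule pivot_rows_mat_unitri)
  show "A = pivot_mat n A * pivot_rows_mat n A"
    using unique_row As_carrier[OF order_refl, unfolded run(3)] by (rule pivot_mat_mult_pivot_rows_mat)
qed

theorem theorem2p5:
  fixes A Q :: "'a::field mat" and n :: nat
  assumes "A \<in> strict_upper_set n" and "is_belitskii_cf n A"
    and "subpermutation n Q"
    and "\<exists>B \<in> upper_tri_group n. \<exists>B' \<in> upper_tri_group n. A = B * Q * B'"
  shows "\<exists>U \<in> unitri_group n. A = Q * U"
proof -
  note factor = belitskii_cf_factorization[OF assms(2)]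
  obtain B B' where "B \<in> upper_tri_group n" "B' \<in> upper_tri_group n" "A = B * Q * B'"
    using assms(4) by blast
  then have "pivot_mat n A = Q"
    using subpermutation_double_coset_eq[OF factor(1) assms(3)] factor(2,3)
    unfolding unitri_group_def by auto
  then show ?thesis using factor(2,3) by auto
qed

end
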